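(* Let $\lambda$ be an infinite cardinal with $\lambda^{\aleph_0}=\lambda$, and let $C=\{\delta_\xi:\xi<\lambda^+\}\subseteq\lambda^+$ be a closed unbounded set enumerated in increasing order. Then there is a function $K:[\lambda^+]^{\aleph_0}\to\lambda$ such that whenever $A,B\in[\lambda^+]^{\aleph_0}$ satisfy $K(A)=K(B)$ and there is $\xi<\lambda^+$ with $A\cap[\delta_\xi,\delta_{\xi+1})\neq\emptyset$ and $B\cap[\delta_\xi,\delta_{\xi+1})\neq\emptyset$, then $A\cap\delta_{\xi+1}=B\cap\delta_{\xi+1}$. (Consequently, if $K(A)=K(B)$ then $A\cap B$ is an initial segment of both $A$ and $B$.)
   Context: $[\lambda^+]^{\aleph_0}$ denotes the set of countably infinite subsets of $\lambda^+$. Ordinals are identified with the sets of smaller ordinals, so $A\cap\delta$ is the set of elements of $A$ below $\delta$. *)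

theory Defs
  imports Main "HOL-Library.Countable_Set"
begin

text \<open>Ordinals below a cardinal are modelled as the field of a well-order (cardinal order) R.
  Strict order: (a,b) \<in> R and a \<noteq> b.\<close>

definition ord_less :: "'a rel \<Rightarrow> 'a \<Rightarrow> 'a \<Rightarrow> bool" where
  "ord_less R a b \<longleftrightarrow> (a, b) \<in> R \<and> a \<noteq> b"

definition ord_succ :: "'a rel \<Rightarrow> 'a \<Rightarrow> 'a" where
  "ord_succ R x = wo_rel.suc R {x}"

definition club :: "'a rel \<Rightarrow> 'a set \<Rightarrow> bool" where
  "club R C \<longleftrightarrow> C \<subseteq> Field R
     \<and> (\<forall>a\<in>Field R. \<exists>c\<in>C. (a, c) \<in> R)
     \<and> (\<forall>a\<in>Field R. (\<exists>b. ord_less R b a)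
            \<and> (\<forall>b. ord_less R b a \<longrightarrow> (\<exists>c\<in>C. ord_less R b c \<and> ord_less R c a))
            \<longrightarrow> a \<in> C)"

definition ctbl_subsets :: "'a rel \<Rightarrow> 'a set set" where
  "ctbl_subsets R = {A. A \<subseteq> Field R \<and> countable A \<and> infinite A}"

definition ord_interval :: "'a rel \<Rightarrow> 'a \<Rightarrow> 'a \<Rightarrow> 'a set" where
  "ord_interval R a b = {x \<in> Field R. (a, x) \<in> R \<and> ord_less R x b}"

definition ord_below :: "'a rel \<Rightarrow> 'a \<Rightarrow> 'a set" where
  "ord_below R b = {x \<in> Field R. ord_less R x b}"

end

theory Submission
  imports Defs
begin

text \<open>
  Fix injections \<open>e\<^sub>\<gamma> : \<gamma> \<rightarrow> \<lambda>\<close> for \<open>\<gamma> < \<lambda>\<^sup>+\<close>. A countable set \<open>A\<close> is enlarged to a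
  countable set \<open>M\<^sub>A\<close> containing \<open>A\<close> and the endpoints \<open>\<delta>\<^sub>\<xi>\<^sub>+\<^sub>1\<close> of the blocks \<open>A\<close> meets, closed
  under: if \<open>\<gamma>, \<gamma>', \<beta>' \<in> M\<^sub>A\<close>, \<open>\<beta> < \<gamma>\<close>, \<open>\<beta>' < \<gamma>'\<close> and \<open>e\<^sub>\<gamma>(\<beta>) = e\<^sub>\<gamma>\<^sub>'(\<beta>')\<close>, then \<open>\<beta> \<in> M\<^sub>A\<close>.
  \<open>K(A)\<close> codes, along an enumeration of \<open>M\<^sub>A\<close>, the order, membership in \<open>A\<close> and the labels
  \<open>e\<close>; this is a countable sequence in \<open>\<lambda>\<close>, and there are only \<open>\<lambda>\<^bsup>\<aleph>\<^sub>0\<^esup> = \<lambda>\<close> of them.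
  If \<open>K(A) = K(B)\<close> and both sets meet the block of \<open>\<xi>\<close>, then \<open>\<gamma> = \<delta>\<^sub>\<xi>\<^sub>+\<^sub>1\<close> lies in \<open>M\<^sub>A\<close> and
  \<open>M\<^sub>B\<close>; equal labels and the closure give \<open>M\<^sub>A \<inter> \<gamma> = M\<^sub>B \<inter> \<gamma>\<close>. The enumerations
  induce an order isomorphism \<open>M\<^sub>A \<cong> M\<^sub>B\<close>, which is the identity on this common initial
  segment, so the membership codes yield \<open>A \<inter> \<gamma> = B \<inter> \<gamma>\<close>.
\<close>

unbundle cardinal_syntax

lemma card_of_underS_ordLeq_of_cardSuc:
  assumes L: "Card_order L" and R: "Card_order R" and R_succ: "R =o cardSuc L"
    and \<gamma>: "\<gamma> \<in> Field R"
  shows "|underS R \<gamma>| \<le>o L"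
proof -
  have "|underS R \<gamma>| <o cardSuc L"
    using card_of_underS[OF R \<gamma>] R_succ by (rule ordLess_ordIso_trans)
  then show ?thesis using cardSuc_ordLeq_ordLess[OF L card_of_Card_order] by blast
qed

lemma infinite_Field_if_ordIso_cardSuc:
  assumes L: "Card_order L" "infinite (Field L)" and R: "Card_order R" "R =o cardSuc L"
  shows "infinite (Field R)"
proof -
  have "R =o |Field (cardSuc L)|"
    using R(2) card_of_Field_ordIso[OF cardSuc_Card_order[OF L(1)]] ordIso_symmetric
      ordIso_transitive by blast
  then show ?thesis
    using card_of_ordIso_finite_Field[OF R(1)] cardSuc_finite[OF L(1)] L(2) by blast
qed

lemma ex_injective_labels:
  assumes L: "Card_order L" and R: "Card_order R" and R_succ: "R =o cardSuc L"
    and "Field L \<noteq> {}"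
  shows "\<exists>e. \<forall>\<gamma>. inj_on (e \<gamma>) (underS R \<gamma>) \<and> range (e \<gamma>) \<subseteq> Field L"
proof -
  obtain a where a: "a \<in> Field L" using \<open>Field L \<noteq> {}\<close> by blast
  have "\<exists>f. inj_on f (underS R \<gamma>) \<and> range f \<subseteq> Field L" for \<gamma>
  proof -
    have "|underS R \<gamma>| \<le>o |Field L|"
    proof (cases "\<gamma> \<in> Field R")
      case True
      then have "|underS R \<gamma>| \<le>o L" by (rule card_of_underS_ordLeq_of_cardSuc[OF L R R_succ])
      then show ?thesis using ordIso_symmetric[OF card_of_Field_ordIso[OF L]]
        by (rule ordLeq_ordIso_trans)
    qed (simp add: underS_empty card_of_empty)
    then obtain f where "inj_on f (underS R \<gamma>)" "f ` underS R \<gamma> \<subseteq> Field L"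
      using card_of_ordLeq[of "underS R \<gamma>" "Field L"] by blast
    with a show ?thesis
      by (intro exI[of _ "\<lambda>x. if x \<in> underS R \<gamma> then f x else a"]) (auto simp: inj_on_def)
  qed
  then show ?thesis by (intro choice allI)
qed

lemma card_of_finite_Times_ordLeq:
  assumes L: "Card_order L" and inf: "infinite (Field L)" and F: "finite F"
  shows "|F \<times> Field L| \<le>o L"
proof (rule card_of_Times_ordLeq_infinite_Field[OF inf _ _ L])
  have "|F| <o L"
    using finite_ordLess_infinite[OF card_of_Well_order card_order_on_well_order_on[OF L]]
      F inf by (simp add: Field_card_of)
  then show "|F| \<le>o L" by (rule ordLess_imp_ordLeq)
  show "|Field L| \<le>o L" using card_of_Field_ordIso[OF L] by (rule ordIso_imp_ordLeq)
qed

lemma ex_inj_Func_nat_into_Field: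
  assumes L: "Card_order L" and pow: "L ^c natLeq =o L" and X: "|X| \<le>o L"
  shows "\<exists>c. inj_on c (Func (UNIV :: nat set) X) \<and> c ` Func UNIV X \<subseteq> Field L"
proof -
  have "|X| ^c natLeq \<le>o L"
    using cexp_mono1[OF X natLeq_Card_order] pow by (rule ordLeq_ordIso_trans)
  then have "|Func (UNIV :: nat set) X| \<le>o |Field L|"
    using ordIso_symmetric[OF card_of_Field_ordIso[OF L]]
    unfolding cexp_def Field_natLeq Field_card_of by (rule ordLeq_ordIso_trans)
  then show ?thesis using card_of_ordLeq[of "Func UNIV X" "Field L"] by blast
qed

lemma ord_less_iff_underS: "ord_less R a b \<longleftrightarrow> a \<in> underS R b"
  by (auto simp: ord_less_def underS_def)

lemma ord_less_Field: "ord_less R a b \<Longrightarrow> a \<in> Field R \<and> b \<in> Field R"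
  by (auto simp: ord_less_def intro: FieldI1 FieldI2)

lemma ord_le_less_trans:
  assumes wo: "Well_order R" and ab: "(a, b) \<in> R" and bc: "ord_less R b c"
  shows "ord_less R a c"
proof -
  have "trans R" "antisym R" using wo wo_rel.TRANS wo_rel.ANTISYM by (auto simp: wo_rel_def)
  then show ?thesis using ab bc unfolding ord_less_def by (metis antisymD transD)
qed

lemma ord_less_trans:
  assumes "Well_order R" "ord_less R a b" "ord_less R b c"
  shows "ord_less R a c"
  using assms(2) ord_le_less_trans[OF assms(1) _ assms(3)] by (simp add: ord_less_def)

lemma ord_less_linear:
  assumes "Well_order R" and "a \<in> Field R" and "b \<in> Field R"
  shows "a = b \<or> ord_less R a b \<or> ord_less R b a"
  using assms by (auto simp: ord_less_def well_order_on_def linear_order_on_def total_on_def)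

lemma ord_less_induct:
  assumes "Well_order R" and step: "\<And>z. (\<And>y. ord_less R y z \<Longrightarrow> P y) \<Longrightarrow> P z"
  shows "P z"
proof -
  have "wf (R - Id)" using assms(1) by (simp add: well_order_on_def)
  then show ?thesis
    by (induction z rule: wf_induct_rule) (rule step, simp add: ord_less_def)
qed

lemma ord_less_ord_succ:
  assumes wo: "Well_order R" and "ord_less R \<xi> \<eta>"
  shows "ord_less R \<xi> (ord_succ R \<xi>)" and "(ord_succ R \<xi>, \<eta>) \<in> R"
proof -
  have wo_rel: "wo_rel R" using wo by (simp add: wo_rel_def)
  have \<xi>: "{\<xi>} \<subseteq> Field R" using ord_less_Field[OF assms(2)] by simp
  have \<eta>: "\<eta> \<in> AboveS R {\<xi>}"
    using assms(2) by (auto simp: AboveS_def ord_less_def intro: FieldI2)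
  then have "AboveS R {\<xi>} \<noteq> {}" by blast
  then show "ord_less R \<xi> (ord_succ R \<xi>)"
    using wo_rel.suc_greater[OF wo_rel \<xi>] by (auto simp: ord_succ_def ord_less_def)
  show "(ord_succ R \<xi>, \<eta>) \<in> R"
    using wo_rel.suc_least_AboveS[OF wo_rel \<eta>] by (simp add: ord_succ_def)
qed

definition label_closure_step :: "('a \<Rightarrow> 'a set) \<Rightarrow> ('a \<Rightarrow> 'a \<Rightarrow> 'k) \<Rightarrow> 'a set \<Rightarrow> 'a set" where
  "label_closure_step U e M =
     M \<union> {\<beta>. \<exists>\<gamma>\<in>M. \<exists>\<gamma>'\<in>M. \<exists>\<beta>'\<in>M. \<beta> \<in> U \<gamma> \<and> \<beta>' \<in> U \<gamma>' \<and> e \<gamma> \<beta> = e \<gamma>' \<beta>'}"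

definition label_closure :: "('a \<Rightarrow> 'a set) \<Rightarrow> ('a \<Rightarrow> 'a \<Rightarrow> 'k) \<Rightarrow> 'a set \<Rightarrow> 'a set" where
  "label_closure U e M\<^sub>0 = (\<Union>n. (label_closure_step U e ^^ n) M\<^sub>0)"

lemma countable_label_closure_step:
  assumes inj: "\<And>\<gamma>. inj_on (e \<gamma>) (U \<gamma>)" and M: "countable M"
  shows "countable (label_closure_step U e M)"
proof -
  let ?V = "case_prod e ` (M \<times> M)"
  have V: "countable ?V" using M by simp
  have "countable {\<beta> \<in> U \<gamma>. e \<gamma> \<beta> \<in> ?V}" for \<gamma>
    by (rule countable_image_inj_on[of "e \<gamma>"])
      (auto intro: countable_subset[OF _ V] inj_on_subset[OF inj])
  then have "countable (\<Union>\<gamma>\<in>M. {\<beta> \<in> U \<gamma>. e \<gamma> \<beta> \<in> ?V})" using M by blast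
  then have "countable (M \<union> (\<Union>\<gamma>\<in>M. {\<beta> \<in> U \<gamma>. e \<gamma> \<beta> \<in> ?V}))" using M by simp
  moreover have "label_closure_step U e M \<subseteq> M \<union> (\<Union>\<gamma>\<in>M. {\<beta> \<in> U \<gamma>. e \<gamma> \<beta> \<in> ?V})"
  proof
    fix \<beta> assume "\<beta> \<in> label_closure_step U e M"
    then consider "\<beta> \<in> M"
      | \<gamma> \<gamma>' \<beta>' where "\<gamma> \<in> M" "\<gamma>' \<in> M" "\<beta>' \<in> M" "\<beta> \<in> U \<gamma>" "e \<gamma> \<beta> = e \<gamma>' \<beta>'"
      unfolding label_closure_step_def by blast
    then show "\<beta> \<in> M \<union> (\<Union>\<gamma>\<in>M. {\<beta> \<in> U \<gamma>. e \<gamma> \<beta> \<in> ?V})"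
    proof cases
      case (2 \<gamma> \<gamma>' \<beta>')
      then show ?thesis by (auto intro: rev_image_eqI[of "(\<gamma>', \<beta>')"])
    qed simp
  qed
  ultimately show ?thesis by (rule countable_subset[rotated])
qed

lemma countable_label_closure:
  assumes "\<And>\<gamma>. inj_on (e \<gamma>) (U \<gamma>)" and "countable M\<^sub>0"
  shows "countable (label_closure U e M\<^sub>0)"
proof -
  have "countable ((label_closure_step U e ^^ n) M\<^sub>0)" for n
    by (induction n) (simp_all add: assms countable_label_closure_step)
  then show ?thesis unfolding label_closure_def by blast
qed

lemma subset_label_closure: "M\<^sub>0 \<subseteq> label_closure U e M\<^sub>0"
  unfolding label_closure_def by (metis UN_upper UNIV_I funpow_0)

lemma label_closure_subset:
  assumes "M\<^sub>0 \<subseteq> S" and "\<And>\<gamma>. U \<gamma> \<subseteq> S"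
  shows "label_closure U e M\<^sub>0 \<subseteq> S"
proof -
  have "(label_closure_step U e ^^ n) M\<^sub>0 \<subseteq> S" for n
    by (induction n) (use assms in \<open>auto simp: label_closure_step_def\<close>)
  then show ?thesis unfolding label_closure_def by blast
qed

lemma label_closure_closed:
  assumes "\<gamma> \<in> label_closure U e M\<^sub>0" "\<gamma>' \<in> label_closure U e M\<^sub>0" "\<beta>' \<in> label_closure U e M\<^sub>0"
    and "\<beta> \<in> U \<gamma>" "\<beta>' \<in> U \<gamma>'" "e \<gamma> \<beta> = e \<gamma>' \<beta>'"
  shows "\<beta> \<in> label_closure U e M\<^sub>0"
proof -
  let ?M = "\<lambda>n. (label_closure_step U e ^^ n) M\<^sub>0"
  have stages: "?M m \<subseteq> ?M n" if "m \<le> n" for m n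
    using lift_Suc_mono_le[of ?M m n] that by (simp add: label_closure_step_def)
  obtain a b c where "\<gamma> \<in> ?M a" "\<gamma>' \<in> ?M b" "\<beta>' \<in> ?M c"
    using assms(1-3) unfolding label_closure_def by blast
  moreover define n where "n = max a (max b c)"
  then have "a \<le> n" "b \<le> n" "c \<le> n" by simp_all
  ultimately have "\<gamma> \<in> ?M n" "\<gamma>' \<in> ?M n" "\<beta>' \<in> ?M n"
    using stages by blast+
  then have "\<beta> \<in> ?M (Suc n)"
    using assms(4-6) by (auto simp: label_closure_step_def)
  then show ?thesis unfolding label_closure_def by blast
qed

lemma label_closure_transfer:
  assumes labels: "\<And>i j. m\<^sub>1 j \<in> U (m\<^sub>1 i) \<Longrightarrow> m\<^sub>2 j \<in> U (m\<^sub>2 i) \<and> e (m\<^sub>1 i) (m\<^sub>1 j) = e (m\<^sub>2 i) (m\<^sub>2 j)"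
    and m\<^sub>2: "range m\<^sub>2 = label_closure U e M\<^sub>0"
    and \<gamma>: "\<gamma> \<in> range m\<^sub>1" "\<gamma> \<in> range m\<^sub>2"
  shows "range m\<^sub>1 \<inter> U \<gamma> \<subseteq> range m\<^sub>2"
proof
  fix \<beta> assume "\<beta> \<in> range m\<^sub>1 \<inter> U \<gamma>"
  then obtain i j where i: "\<gamma> = m\<^sub>1 i" and j: "\<beta> = m\<^sub>1 j" and "m\<^sub>1 j \<in> U (m\<^sub>1 i)"
    using \<gamma>(1) by blast
  moreover from this have "m\<^sub>2 j \<in> U (m\<^sub>2 i)" "e (m\<^sub>1 i) (m\<^sub>1 j) = e (m\<^sub>2 i) (m\<^sub>2 j)"
    using labels by blast+
  ultimately show "\<beta> \<in> range m\<^sub>2"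
    using label_closure_closed[of "m\<^sub>1 i" U e M\<^sub>0 "m\<^sub>2 i" "m\<^sub>2 j" "m\<^sub>1 j"] \<gamma>(2) m\<^sub>2 by auto
qed

lemma enumerations_agree_below:
  assumes wo: "Well_order R" and Field: "range m\<^sub>1 \<subseteq> Field R" "range m\<^sub>2 \<subseteq> Field R"
    and order: "\<And>i j. ord_less R (m\<^sub>1 i) (m\<^sub>1 j) \<longleftrightarrow> ord_less R (m\<^sub>2 i) (m\<^sub>2 j)"
    and common: "range m\<^sub>1 \<inter> underS R \<gamma> = range m\<^sub>2 \<inter> underS R \<gamma>"
    and below: "ord_less R (m\<^sub>1 i) \<gamma>"
  shows "m\<^sub>2 i = m\<^sub>1 i"
proof -
  have "\<forall>i. m\<^sub>1 i = z \<longrightarrow> ord_less R z \<gamma> \<longrightarrow> m\<^sub>2 i = z" for z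
  proof (induction z rule: ord_less_induct[OF wo])
    case (1 z)
    show ?case
    proof (intro allI impI)
      fix i assume z: "m\<^sub>1 i = z" and z\<gamma>: "ord_less R z \<gamma>"
      have IH: "m\<^sub>2 k = m\<^sub>1 k" if "ord_less R (m\<^sub>1 k) z" for k
        using 1 that ord_less_trans[OF wo that z\<gamma>] by blast
      have "\<not> ord_less R (m\<^sub>2 i) z"
      proof
        assume lt: "ord_less R (m\<^sub>2 i) z"
        then have "m\<^sub>2 i \<in> range m\<^sub>2 \<inter> underS R \<gamma>"
          using ord_less_trans[OF wo lt z\<gamma>] by (simp add: ord_less_iff_underS)
        then have "m\<^sub>2 i \<in> range m\<^sub>1" using common by blast
        then obtain k where k: "m\<^sub>1 k = m\<^sub>2 i" by (metis rangeE)
        then have "m\<^sub>2 k = m\<^sub>2 i" using IH lt by simp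
        moreover have "ord_less R (m\<^sub>2 k) (m\<^sub>2 i)" using order[of k i] lt k z by simp
        ultimately show False by (simp add: ord_less_def)
      qed
      moreover have "\<not> ord_less R z (m\<^sub>2 i)"
      proof
        assume lt: "ord_less R z (m\<^sub>2 i)"
        have "z \<in> range m\<^sub>1 \<inter> underS R \<gamma>" using z z\<gamma> by (auto simp: ord_less_iff_underS)
        then have "z \<in> range m\<^sub>2" using common by blast
        then obtain k where k: "m\<^sub>2 k = z" by (metis rangeE)
        then have "ord_less R (m\<^sub>1 k) z" using order[of k i] lt z by simp
        with IH k show False by (simp add: ord_less_def)
      qed
      ultimately show "m\<^sub>2 i = z" using ord_less_linear[OF wo] Field z by blast
    qed
  qed
  then show ?thesis using below by blast
qed

locale block_coding =
  fixes R :: "'a rel" and \<delta> :: "'a \<Rightarrow> 'a" and e :: "'a \<Rightarrow> 'a \<Rightarrow> 'k"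
  assumes well_order: "Well_order R"
    and unbounded: "\<And>\<xi>. \<xi> \<in> Field R \<Longrightarrow> \<exists>\<eta>. ord_less R \<xi> \<eta>"
    and \<delta>_Field: "\<And>\<xi>. \<xi> \<in> Field R \<Longrightarrow> \<delta> \<xi> \<in> Field R"
    and \<delta>_strict_mono: "\<And>\<xi> \<eta>. ord_less R \<xi> \<eta> \<Longrightarrow> ord_less R (\<delta> \<xi>) (\<delta> \<eta>)"
    and e_inj: "\<And>\<gamma>. inj_on (e \<gamma>) (underS R \<gamma>)"
begin

abbreviation block :: "'a \<Rightarrow> 'a set" where
  "block \<xi> \<equiv> ord_interval R (\<delta> \<xi>) (\<delta> (ord_succ R \<xi>))"

text \<open>\<open>cover A\<close> is the set \<open>M\<^sub>A\<close> above and \<open>pattern A\<close> is the code \<open>K(A)\<close> before it is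
  injected into \<open>\<lambda>\<close>.\<close>

definition cover :: "'a set \<Rightarrow> 'a set" where
  "cover A = label_closure (underS R) e
     (A \<union> (\<lambda>\<xi>. \<delta> (ord_succ R \<xi>)) ` {\<xi> \<in> Field R. A \<inter> block \<xi> \<noteq> {}})"

definition enum :: "'a set \<Rightarrow> nat \<Rightarrow> 'a" where
  "enum A = from_nat_into (cover A)"

definition pattern :: "'a set \<Rightarrow> nat \<Rightarrow> (bool \<times> bool) \<times> 'k" where
  "pattern A n = (case prod_decode n of (i, j) \<Rightarrow>
     ((ord_less R (enum A i) (enum A j), enum A i \<in> A), e (enum A i) (enum A j)))"

lemma ord_succ_in_Field:
  assumes "\<xi> \<in> Field R"
  shows "ord_succ R \<xi> \<in> Field R"
proof -
  obtain \<eta> where "ord_less R \<xi> \<eta>" using unbounded assms by blast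
  then have "ord_less R \<xi> (ord_succ R \<xi>)" by (rule ord_less_ord_succ(1)[OF well_order])
  then show ?thesis by (blast dest: ord_less_Field)
qed

lemma \<delta>_mono_le:
  assumes "(\<xi>, \<eta>) \<in> R"
  shows "(\<delta> \<xi>, \<delta> \<eta>) \<in> R"
proof (cases "\<xi> = \<eta>")
  case True
  have "\<delta> \<eta> \<in> Field R" using assms by (intro \<delta>_Field FieldI2)
  with True show ?thesis using wo_rel.REFL[of R] well_order by (simp add: wo_rel_def refl_on_def)
next
  case False
  with assms show ?thesis using \<delta>_strict_mono by (simp add: ord_less_def)
qed

lemma blocks_disjoint_ordered:
  assumes "ord_less R \<xi> \<eta>"
  shows "block \<xi> \<inter> block \<eta> = {}"
proof -
  let ?\<gamma> = "\<delta> (ord_succ R \<xi>)"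
  have "(?\<gamma>, \<delta> \<eta>) \<in> R" using \<delta>_mono_le ord_less_ord_succ(2)[OF well_order assms] .
  have False if "x \<in> block \<xi>" "x \<in> block \<eta>" for x
  proof -
    have "(\<delta> \<eta>, x) \<in> R" and x: "ord_less R x ?\<gamma>" using that by (auto simp: ord_interval_def)
    then have "(?\<gamma>, x) \<in> R"
      using \<open>(?\<gamma>, \<delta> \<eta>) \<in> R\<close> wo_rel.TRANS[of R] well_order by (meson transD wo_rel_def)
    then have "ord_less R ?\<gamma> ?\<gamma>" using x by (rule ord_le_less_trans[OF well_order])
    then show False by (simp add: ord_less_def)
  qed
  then show ?thesis by blast
qed

lemma blocks_disjoint:
  assumes "\<xi> \<in> Field R" "\<eta> \<in> Field R" "x \<in> block \<xi>" "x \<in> block \<eta>"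
  shows "\<xi> = \<eta>"
  using ord_less_linear[OF well_order assms(1,2)] blocks_disjoint_ordered assms(3,4) by blast

lemma countable_blocks_met:
  assumes "countable A"
  shows "countable {\<xi> \<in> Field R. A \<inter> block \<xi> \<noteq> {}}"
proof -
  let ?index = "\<lambda>x. THE \<xi>. \<xi> \<in> Field R \<and> x \<in> block \<xi>"
  have "{\<xi> \<in> Field R. A \<inter> block \<xi> \<noteq> {}} \<subseteq> ?index ` A"
  proof
    fix \<xi> assume "\<xi> \<in> {\<xi> \<in> Field R. A \<inter> block \<xi> \<noteq> {}}"
    then obtain x where "x \<in> A" "\<xi> \<in> Field R" "x \<in> block \<xi>" by blast
    moreover have "?index x = \<xi>"
      using calculation blocks_disjoint by (intro the_equality) blast+
    ultimately show "\<xi> \<in> ?index ` A" by blast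
  qed
  then show ?thesis by (rule countable_subset) (simp add: assms)
qed

lemma countable_cover:
  assumes "countable A"
  shows "countable (cover A)"
  unfolding cover_def
  by (rule countable_label_closure[OF e_inj]) (simp add: assms countable_blocks_met)

lemma subset_cover: "A \<subseteq> cover A"
  unfolding cover_def by (rule subset_trans[OF _ subset_label_closure]) (rule Un_upper1)

lemma block_end_in_cover:
  assumes "\<xi> \<in> Field R" "A \<inter> block \<xi> \<noteq> {}"
  shows "\<delta> (ord_succ R \<xi>) \<in> cover A"
  unfolding cover_def by (rule subsetD[OF subset_label_closure]) (use assms in blast)

lemma cover_Field: "A \<subseteq> Field R \<Longrightarrow> cover A \<subseteq> Field R"
  unfolding cover_def
  by (rule label_closure_subset) (auto simp: underS_Field \<delta>_Field ord_succ_in_Field)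

lemma range_enum:
  assumes "countable A" "A \<noteq> {}"
  shows "range (enum A) = cover A"
proof -
  have "cover A \<noteq> {}" using subset_cover assms(2) by blast
  then show ?thesis by (simp add: enum_def range_from_nat_into countable_cover assms(1))
qed

lemma pattern_eq_imp_initial_segment_subset:
  assumes A: "countable A" "A \<subseteq> Field R" and B: "countable B" "B \<subseteq> Field R"
    and same: "pattern A = pattern B"
    and \<xi>: "\<xi> \<in> Field R" "A \<inter> block \<xi> \<noteq> {}" "B \<inter> block \<xi> \<noteq> {}"
  shows "A \<inter> ord_below R (\<delta> (ord_succ R \<xi>)) \<subseteq> B"
proof -
  define \<gamma> where "\<gamma> = \<delta> (ord_succ R \<xi>)"
  have ranges: "range (enum A) = cover A" "range (enum B) = cover B"
    using range_enum A(1) B(1) \<xi> by auto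
  have same_order: "ord_less R (enum A i) (enum A j) \<longleftrightarrow> ord_less R (enum B i) (enum B j)"
    and same_member: "enum A i \<in> A \<longleftrightarrow> enum B i \<in> B"
    and same_label: "e (enum A i) (enum A j) = e (enum B i) (enum B j)" for i j
    using fun_cong[OF same, of "prod_encode (i, j)"] by (simp_all add: pattern_def)
  have \<gamma>: "\<gamma> \<in> range (enum A)" "\<gamma> \<in> range (enum B)"
    unfolding \<gamma>_def ranges using block_end_in_cover \<xi> by auto
  have labels_AB: "enum B j \<in> underS R (enum B i) \<and> e (enum A i) (enum A j) = e (enum B i) (enum B j)"
    if "enum A j \<in> underS R (enum A i)" for i j
    using that same_order[of j i] same_label[of i j] by (simp add: ord_less_iff_underS)
  have labels_BA: "enum A j \<in> underS R (enum A i) \<and> e (enum B i) (enum B j) = e (enum A i) (enum A j)"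
    if "enum B j \<in> underS R (enum B i)" for i j
    using that same_order[of j i] same_label[of i j] by (simp add: ord_less_iff_underS)
  have "range (enum A) \<inter> underS R \<gamma> \<subseteq> range (enum B)"
    using label_closure_transfer[OF labels_AB ranges(2)[unfolded cover_def] \<gamma>] .
  moreover have "range (enum B) \<inter> underS R \<gamma> \<subseteq> range (enum A)"
    using label_closure_transfer[OF labels_BA ranges(1)[unfolded cover_def] \<gamma>(2,1)] .
  ultimately have common: "range (enum A) \<inter> underS R \<gamma> = range (enum B) \<inter> underS R \<gamma>"
    by blast
  have Field: "range (enum A) \<subseteq> Field R" "range (enum B) \<subseteq> Field R"
    using ranges cover_Field A(2) B(2) by auto
  show ?thesis
  proof
    fix x assume x: "x \<in> A \<inter> ord_below R (\<delta> (ord_succ R \<xi>))"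
    then obtain i where i: "x = enum A i" using subset_cover ranges by blast
    then have "ord_less R (enum A i) \<gamma>" using x by (simp add: \<gamma>_def ord_below_def)
    then have "enum B i = enum A i"
      by (rule enumerations_agree_below[OF well_order Field same_order common])
    then show "x \<in> B" using same_member x i by auto
  qed
qed

lemma pattern_eq_imp_initial_segment_eq:
  assumes "countable A" "A \<subseteq> Field R" "countable B" "B \<subseteq> Field R"
    and "pattern A = pattern B"
    and "\<xi> \<in> Field R" "A \<inter> block \<xi> \<noteq> {}" "B \<inter> block \<xi> \<noteq> {}"
  shows "A \<inter> ord_below R (\<delta> (ord_succ R \<xi>)) = B \<inter> ord_below R (\<delta> (ord_succ R \<xi>))"
  using pattern_eq_imp_initial_segment_subset[of A B \<xi>]
    pattern_eq_imp_initial_segment_subset[of B A \<xi>] assms by auto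

lemma ex_injective_code_of_pattern:
  assumes L: "Card_order L" "infinite (Field L)" "L ^c natLeq =o L"
    and e_Field: "\<And>\<gamma> \<beta>. e \<gamma> \<beta> \<in> Field L"
  shows "\<exists>K. (\<forall>A. K A \<in> Field L) \<and> (\<forall>A B. K A = K B \<longrightarrow> pattern A = pattern B)"
proof -
  define X where "X = (UNIV :: (bool \<times> bool) set) \<times> Field L"
  have "|X| \<le>o L" unfolding X_def by (rule card_of_finite_Times_ordLeq[OF L(1,2)]) simp
  then obtain c where c: "inj_on c (Func (UNIV :: nat set) X)" "c ` Func UNIV X \<subseteq> Field L"
    using ex_inj_Func_nat_into_Field[OF L(1,3)] by blast
  have pattern: "pattern A \<in> Func UNIV X" for A
    using e_Field by (auto simp: Func_def X_def pattern_def split: prod.split)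
  show ?thesis
    using c pattern inj_onD[OF c(1)] by (intro exI[of _ "c \<circ> pattern"]) auto
qed

end

lemma block_coding_of_club_enumeration:
  assumes R: "Card_order R" "infinite (Field R)"
    and C: "club R C" and \<delta>: "bij_betw \<delta> (Field R) C"
    and \<delta>_mono: "\<forall>\<xi>\<in>Field R. \<forall>\<eta>\<in>Field R. ord_less R \<xi> \<eta> \<longrightarrow> ord_less R (\<delta> \<xi>) (\<delta> \<eta>)"
    and e_inj: "\<And>\<gamma>. inj_on (e \<gamma>) (underS R \<gamma>)"
  shows "block_coding R \<delta> e"
proof
  show "Well_order R" using R(1) by (rule card_order_on_well_order_on)
  show "\<exists>\<eta>. ord_less R \<xi> \<eta>" if "\<xi> \<in> Field R" for \<xi>
    using infinite_Card_order_limit[OF R that] unfolding ord_less_def by blast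
  have "C \<subseteq> Field R" using C unfolding club_def by (rule conjunct1)
  then show "\<delta> \<xi> \<in> Field R" if "\<xi> \<in> Field R" for \<xi>
    using bij_betwE[OF \<delta>] that by blast
  show "ord_less R (\<delta> \<xi>) (\<delta> \<eta>)" if "ord_less R \<xi> \<eta>" for \<xi> \<eta>
    using \<delta>_mono that ord_less_Field[OF that] by blast
qed (rule e_inj)

theorem lemma2:
  fixes L :: "'k rel" and R :: "'a rel" and C :: "'a set" and \<delta> :: "'a \<Rightarrow> 'a"
  assumes lam_card: "Card_order L" and lam_inf: "infinite (Field L)"
    and lam_pow: "(BNF_Cardinal_Arithmetic.cexp L natLeq, L) \<in> ordIso"
    and R_card: "Card_order R" and R_succ: "(R, cardSuc L) \<in> ordIso"
    and C_club: "club R C"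
    and \<delta>_bij: "bij_betw \<delta> (Field R) C"
    and \<delta>_mono: "\<forall>\<xi>\<in>Field R. \<forall>\<eta>\<in>Field R. ord_less R \<xi> \<eta> \<longrightarrow> ord_less R (\<delta> \<xi>) (\<delta> \<eta>)"
  shows "\<exists>K :: 'a set \<Rightarrow> 'k.
           (\<forall>A\<in>ctbl_subsets R. K A \<in> Field L) \<and>
           (\<forall>A\<in>ctbl_subsets R. \<forall>B\<in>ctbl_subsets R. \<forall>\<xi>\<in>Field R.
              K A = K B
              \<and> A \<inter> ord_interval R (\<delta> \<xi>) (\<delta> (ord_succ R \<xi>)) \<noteq> {}
              \<and> B \<inter> ord_interval R (\<delta> \<xi>) (\<delta> (ord_succ R \<xi>)) \<noteq> {}
              \<longrightarrow> A \<inter> ord_below R (\<delta> (ord_succ R \<xi>)) = B \<inter> ord_below R (\<delta> (ord_succ R \<xi>)))"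
proof -
  obtain e :: "'a \<Rightarrow> 'a \<Rightarrow> 'k"
    where e: "\<forall>\<gamma>. inj_on (e \<gamma>) (underS R \<gamma>) \<and> range (e \<gamma>) \<subseteq> Field L"
    using ex_injective_labels[OF lam_card R_card R_succ infinite_imp_nonempty[OF lam_inf]] by blast
  then have e_inj: "inj_on (e \<gamma>) (underS R \<gamma>)" and e_Field: "e \<gamma> \<beta> \<in> Field L" for \<gamma> \<beta>
    by auto
  interpret block_coding R \<delta> e
    by (rule block_coding_of_club_enumeration[OF R_card _ C_club \<delta>_bij \<delta>_mono e_inj])
      (rule infinite_Field_if_ordIso_cardSuc[OF lam_card lam_inf R_card R_succ])
  obtain K where K: "\<forall>A. K A \<in> Field L" "\<forall>A B. K A = K B \<longrightarrow> pattern A = pattern B"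
    using ex_injective_code_of_pattern[OF lam_card lam_inf lam_pow e_Field]
    by (elim exE conjE) (rule that; assumption)
  show ?thesis
  proof (intro exI[of _ K] conjI ballI impI)
    show "K A \<in> Field L" for A using K(1) by blast
  next
    fix A B \<xi> assume "A \<in> ctbl_subsets R" "B \<in> ctbl_subsets R" "\<xi> \<in> Field R"
      and H: "K A = K B \<and> A \<inter> ord_interval R (\<delta> \<xi>) (\<delta> (ord_succ R \<xi>)) \<noteq> {}
        \<and> B \<inter> ord_interval R (\<delta> \<xi>) (\<delta> (ord_succ R \<xi>)) \<noteq> {}"
    moreover have "pattern A = pattern B" using K(2)[rule_format, OF conjunct1[OF H]] .
    ultimately show "A \<inter> ord_below R (\<delta> (ord_succ R \<xi>)) = B \<inter> ord_below R (\<delta> (ord_succ R \<xi>))"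
      by (intro pattern_eq_imp_initial_segment_eq) (simp_all add: ctbl_subsets_def)
  qed
qed

end
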